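(* Let $f:\{1,\dots,n\}\to\{0,1\}$ and $S=\{i: f(i)=1\}$. Define $s(f(i),i)=0$ if $f(i)=0$ and $s(f(i),i)=i$ if $f(i)=1$, and let $T$ be the string of length $4n+2$ over the alphabet $\{0,\$\}\cup\{1,\dots,n\}$ given by $$T=0^{2n}\circ\$\circ\Big(\bigcirc_{i=1}^{n} 0\circ s(f(i),i)\Big)\circ 0,$$ where $\circ$ and $\bigcirc$ denote concatenation and $0^{2n}$ is $2n$ copies of the symbol $0$. Then the LZ77 factorization of $T$ has exactly $z=2|S|+4$ factors.
   Context: LZ77 factorization (greedy): start with $i=1$; while $i\le |T|$: if $T[i]$ is the first occurrence of its symbol, $T[i]$ is the next factor and $i\gets i+1$; otherwise take the largest $j\ge i$ such that $T[i..j]$ occurs in $T$ starting at some position $i'<i$ (overlap allowed), make $T[i..j]$ the next factor and set $i\gets j+1$. $z$ is the number of factors. The symbols $0,\$,1,\dots,n$ are pairwise distinct. *)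

theory Defs
  imports Main
begin

datatype sym = Zero | Dollar | Num nat

text \<open>Strings are lists, positions are 0-indexed (position p here is position p+1 in the paper).
  The substring of length l starting at p is  take l (drop p T).\<close>

text \<open>T[i..i+l-1] occurs in T starting at some earlier position i' < i (overlap allowed).\<close>
definition occurs_before :: "sym list \<Rightarrow> nat \<Rightarrow> nat \<Rightarrow> bool" where
  "occurs_before T i l \<longleftrightarrow> (\<exists>i'<i. take l (drop i' T) = take l (drop i T))"

definition lz_factor_len :: "sym list \<Rightarrow> nat \<Rightarrow> nat" where
  "lz_factor_len T i =
     (if T ! i \<notin> set (take i T) then 1
      else (GREATEST l. i + l \<le> length T \<and> occurs_before T i l))"

text \<open>lz_factors T i k: the greedy LZ77 factorization of the suffix of T from position i
  (continuing the process started at position 0) produces exactly k factors.\<close>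
inductive lz_factors :: "sym list \<Rightarrow> nat \<Rightarrow> nat \<Rightarrow> bool" where
  lz_done: "i = length T \<Longrightarrow> lz_factors T i 0"
| lz_step: "i < length T \<Longrightarrow> lz_factors T (i + lz_factor_len T i) k \<Longrightarrow> lz_factors T i (Suc k)"

definition s_sym :: "(nat \<Rightarrow> nat) \<Rightarrow> nat \<Rightarrow> sym" where
  "s_sym f i = (if f i = 0 then Zero else Num i)"

definition lz_text :: "nat \<Rightarrow> (nat \<Rightarrow> nat) \<Rightarrow> sym list" where
  "lz_text n f = replicate (2*n) Zero @ [Dollar] @ concat (map (\<lambda>i. [Zero, s_sym f i]) [1..<n+1]) @ [Zero]"

end

theory Submission imports Defs begin

text \<open>The greedy parse of T is 0, 0^(2n-1), \$, then for every i \<in> S in increasing order a run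
  of zeros followed by the fresh symbol i, and finally a run of zeros up to the end of T.
  Every zero run after \$ has length at most 2n - 1, so it is a copy of the prefix 0^(2n); it
  cannot be extended because it is followed by a fresh symbol or by the end of T.
  The hypothesis S \<noteq> {} matters: for S = {} the final run would have length 2n + 1.\<close>

lemma lz_factor_len_fresh: "T ! i \<notin> set (take i T) \<Longrightarrow> lz_factor_len T i = 1"
  by (simp add: lz_factor_len_def)

lemma lz_factor_len_eqI:
  assumes "i' < i" "0 < L" "i + L \<le> length T"
    and copy: "take L (drop i' T) = take L (drop i T)"
    and stop: "i + L < length T \<Longrightarrow> T ! (i + L) \<notin> set (take (i + L) T)"
  shows "lz_factor_len T i = L"
proof -
  have "T ! i = T ! i'"
    using arg_cong[OF copy, of "\<lambda>xs. xs ! 0"] assms(1-3) by simp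
  then have "T ! i \<in> set (take i T)"
    using assms(1-3) by (auto simp: in_set_conv_nth)
  then have "lz_factor_len T i = (GREATEST l. i + l \<le> length T \<and> occurs_before T i l)"
    by (simp add: lz_factor_len_def)
  also have "\<dots> = L"
  proof (rule Greatest_equality)
    show "i + L \<le> length T \<and> occurs_before T i L"
      using assms(1,3) copy by (auto simp: occurs_before_def)
  next
    fix y assume "i + y \<le> length T \<and> occurs_before T i y"
    then obtain j where j: "j < i" "take y (drop j T) = take y (drop i T)" "i + y \<le> length T"
      by (auto simp: occurs_before_def)
    show "y \<le> L"
    proof (rule ccontr)
      assume "\<not> y \<le> L"
      then have "T ! (j + L) = T ! (i + L)"
        using arg_cong[OF j(2), of "\<lambda>xs. xs ! L"] j(1,3) by simp
      moreover have "T ! (j + L) \<in> set (take (i + L) T)"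
        using j \<open>\<not> y \<le> L\<close> by (auto simp: in_set_conv_nth intro!: exI[of _ "j + L"])
      ultimately show False
        using stop j(3) \<open>\<not> y \<le> L\<close> by simp
    qed
  qed
  finally show ?thesis .
qed

lemma lz_factor_len_run:
  assumes "0 < i" "0 < L" "i + L \<le> length T"
    and "\<And>t. t < L \<Longrightarrow> T ! t = x" "\<And>t. t < L \<Longrightarrow> T ! (i + t) = x"
    and "i + L < length T \<Longrightarrow> T ! (i + L) \<notin> set (take (i + L) T)"
  shows "lz_factor_len T i = L"
  by (rule lz_factor_len_eqI[of 0]) (use assms in \<open>auto intro!: nth_equalityI\<close>)

lemma lz_factors_stepI:
  "lz_factors T (i + L) k \<Longrightarrow> lz_factor_len T i = L \<Longrightarrow> i < length T \<Longrightarrow> lz_factors T i (Suc k)"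
  by (simp add: lz_step)

lemma length_concat_pairs: "length (concat (map (\<lambda>i. [x, g i]) xs)) = 2 * length xs"
  by (induction xs) simp_all

lemma nth_concat_pairs:
  "q < 2 * length xs \<Longrightarrow>
    concat (map (\<lambda>i. [x, g i]) xs) ! q = (if even q then x else g (xs ! (q div 2)))"
proof (induction xs arbitrary: q)
  case Nil
  then show ?case by simp
next
  case (Cons a xs)
  show ?case
  proof (cases "q < 2")
    case True
    then show ?thesis by (cases q) (auto simp: nth_Cons')
  next
    case False
    then obtain r where "q = Suc (Suc r)"
      by (metis add_2_eq_Suc le_add_diff_inverse not_less)
    with Cons show ?thesis
      by (simp add: nth_append length_concat_pairs)
  qed
qed

lemma length_lz_text: "length (lz_text n f) = 4 * n + 2"
  by (simp add: lz_text_def length_concat_pairs)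

lemma nth_lz_text:
  assumes "q < 4 * n + 2"
  shows "lz_text n f ! q =
    (if q = 2 * n then Dollar else if 2 * n < q \<and> even q then s_sym f ((q - 2 * n) div 2) else Zero)"
proof -
  consider "q \<le> 2 * n" | "q = 4 * n + 1" | "2 * n < q" "q < 4 * n + 1"
    using assms by linarith
  then show ?thesis
  proof cases
    case 1
    then show ?thesis by (auto simp: lz_text_def nth_append)
  next
    case 2
    then show ?thesis by (simp add: lz_text_def nth_append length_concat_pairs)
  next
    case 3
    then have index: "q - Suc (2 * n) < 2 * n" "even q \<longleftrightarrow> odd (q - Suc (2 * n))"
      "even q \<Longrightarrow> (q - Suc (2 * n)) div 2 + 1 = (q - 2 * n) div 2"
      by (auto elim!: evenE, presburger)
    with 3 have "concat (map (\<lambda>i. [Zero, s_sym f i]) [1..<n + 1]) ! (q - Suc (2 * n)) =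
        (if even q then s_sym f ((q - 2 * n) div 2) else Zero)"
      by (simp add: nth_concat_pairs del: upt_Suc)
    with 3 index(1) show ?thesis
      by (simp add: lz_text_def nth_append length_concat_pairs del: upt_Suc)
  qed
qed

lemma nth_lz_text_Zero:
  assumes "q < 4 * n + 2" "q \<noteq> 2 * n" "2 * n < q \<Longrightarrow> even q \<Longrightarrow> f ((q - 2 * n) div 2) = 0"
  shows "lz_text n f ! q = Zero"
  using assms by (auto simp: nth_lz_text s_sym_def)

lemma nth_lz_text_prefix: "t < 2 * n \<Longrightarrow> lz_text n f ! t = Zero"
  by (simp add: nth_lz_text_Zero)

text \<open>Position 2n + 2j - 1 is the 0 in front of the block of the index j; for j = n + 1 it is
  the final 0 of T.\<close>

lemma nth_lz_text_gap:
  assumes "1 \<le> j" "2 * n + 2 * j - 1 + t < 4 * n + 2"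
    and "\<And>s. t = 2 * s + 1 \<Longrightarrow> j + s \<le> n \<Longrightarrow> f (j + s) = 0"
  shows "lz_text n f ! (2 * n + 2 * j - 1 + t) = Zero"
proof (rule nth_lz_text_Zero)
  assume "even (2 * n + 2 * j - 1 + t)"
  moreover have "2 * n + 2 * j - 1 = 2 * (n + j - 1) + 1"
    using assms(1) by simp
  ultimately obtain s where "t = 2 * s + 1"
    by (auto elim: oddE)
  with assms show "f ((2 * n + 2 * j - 1 + t - 2 * n) div 2) = 0" by auto
qed (use assms in auto)

lemma nth_lz_text_Num:
  "1 \<le> k \<Longrightarrow> k \<le> n \<Longrightarrow> f k \<noteq> 0 \<Longrightarrow> lz_text n f ! (2 * n + 2 * k) = Num k"
  by (simp add: nth_lz_text s_sym_def)

lemma Num_notin_take_lz_text: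
  assumes "k \<le> n"
  shows "Num k \<notin> set (take (2 * n + 2 * k) (lz_text n f))"
proof -
  have "lz_text n f ! q \<noteq> Num k" if "q < 2 * n + 2 * k" for q
  proof -
    have "2 * n < q \<Longrightarrow> (q - 2 * n) div 2 < k" using that by linarith
    then show ?thesis using that assms by (auto simp: nth_lz_text s_sym_def)
  qed
  then show ?thesis using assms by (auto simp: in_set_conv_nth length_lz_text)
qed

lemma lz_factor_len_lz_text_Num:
  assumes "1 \<le> m" "m \<le> n" "f m \<noteq> 0"
  shows "lz_factor_len (lz_text n f) (2 * n + 2 * m) = 1"
  using assms by (simp add: lz_factor_len_fresh nth_lz_text_Num Num_notin_take_lz_text)

lemma lz_factor_len_lz_text_gap:
  assumes "1 \<le> j" "j \<le> m" "m \<le> n" "f m \<noteq> 0" "\<And>k. j \<le> k \<Longrightarrow> k < m \<Longrightarrow> f k = 0"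
  shows "lz_factor_len (lz_text n f) (2 * n + 2 * j - 1) = 2 * (m - j) + 1"
proof (rule lz_factor_len_run[where x = Zero])
  let ?T = "lz_text n f" and ?p = "2 * n + 2 * j - 1" and ?L = "2 * (m - j) + 1"
  show "?T ! (?p + t) = Zero" if "t < ?L" for t
  proof (rule nth_lz_text_gap)
    show "?p + t < 4 * n + 2" using that assms(1-3) by linarith
    show "f (j + s) = 0" if "t = 2 * s + 1" for s
      by (rule assms(5)) (use that \<open>t < ?L\<close> in auto)
  qed (use assms in auto)
  have "?p + ?L = 2 * n + 2 * m"
    using assms(1,2) by simp
  then show "?T ! (?p + ?L) \<notin> set (take (?p + ?L) ?T)"
    using assms(1-4) by (simp only:) (simp add: nth_lz_text_Num Num_notin_take_lz_text)
qed (use assms in \<open>auto simp: length_lz_text nth_lz_text_prefix\<close>)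

lemma lz_factor_len_lz_text_last_gap:
  assumes "2 \<le> j" "j \<le> n + 1" "\<And>k. j \<le> k \<Longrightarrow> k \<le> n \<Longrightarrow> f k = 0"
  shows "lz_factor_len (lz_text n f) (2 * n + 2 * j - 1) = 2 * n + 3 - 2 * j"
proof (rule lz_factor_len_run[where x = Zero])
  let ?T = "lz_text n f" and ?p = "2 * n + 2 * j - 1" and ?L = "2 * n + 3 - 2 * j"
  show "?T ! t = Zero" if "t < ?L" for t
    using that assms(1) by (intro nth_lz_text_prefix) linarith
  show "?T ! (?p + t) = Zero" if "t < ?L" for t
  proof (rule nth_lz_text_gap)
    show "?p + t < 4 * n + 2" using that assms(1,2) by linarith
  qed (use assms in auto)
qed (use assms in \<open>auto simp: length_lz_text\<close>)

lemma lz_factors_lz_text_suffix: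
  assumes "\<exists>i\<in>{1..n}. f i \<noteq> 0" "1 \<le> j" "j \<le> n + 1"
  shows "lz_factors (lz_text n f) (2 * n + 2 * j - 1) (2 * card {i\<in>{j..n}. f i \<noteq> 0} + 1)"
  using assms(2,3)
proof (induction "n + 1 - j" arbitrary: j rule: less_induct)
  case less
  let ?T = "lz_text n f" and ?p = "2 * n + 2 * j - 1"
  show ?case
  proof (cases "{i\<in>{j..n}. f i \<noteq> 0} = {}")
    case True
    have "j \<noteq> 1" using True assms(1) by auto
    let ?L = "2 * n + 3 - 2 * j"
    have "lz_factors ?T (?p + ?L) 0"
      by (rule lz_done) (use less.prems in \<open>simp add: length_lz_text\<close>)
    then have "lz_factors ?T ?p (Suc 0)"
      by (rule lz_factors_stepI[OF _ lz_factor_len_lz_text_last_gap])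
        (use less.prems \<open>j \<noteq> 1\<close> True in \<open>auto simp: length_lz_text\<close>)
    then show ?thesis
      by (simp only: True card.empty mult_0_right add_0 One_nat_def)
  next
    case False
    define m where "m = Min {i\<in>{j..n}. f i \<noteq> 0}"
    have m: "j \<le> m" "m \<le> n" "f m \<noteq> 0"
      using Min_in[OF _ False] by (auto simp: m_def)
    have below_m: "f k = 0" if "j \<le> k" "k < m" for k
      using Min_le[of "{i\<in>{j..n}. f i \<noteq> 0}" k] that m(2) by (fastforce simp: m_def)
    let ?L = "2 * (m - j) + 1"
    have "?p + ?L = 2 * n + 2 * m"
      using less.prems m(1) by simp
    have "lz_factors ?T (2 * n + 2 * (m + 1) - 1) (2 * card {i\<in>{m + 1..n}. f i \<noteq> 0} + 1)"
      using less.prems m by (intro less.hyps) auto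
    then have "lz_factors ?T (?p + ?L) (Suc (2 * card {i\<in>{m + 1..n}. f i \<noteq> 0} + 1))"
      unfolding \<open>?p + ?L = 2 * n + 2 * m\<close>
      using less.prems m lz_factors_stepI[OF _ lz_factor_len_lz_text_Num] by (simp add: length_lz_text)
    then have "lz_factors ?T ?p (Suc (Suc (2 * card {i\<in>{m + 1..n}. f i \<noteq> 0} + 1)))"
      by (rule lz_factors_stepI[OF _ lz_factor_len_lz_text_gap])
        (use less.prems m below_m in \<open>auto simp: length_lz_text\<close>)
    moreover have "{i\<in>{j..n}. f i \<noteq> 0} = insert m {i\<in>{m + 1..n}. f i \<noteq> 0}"
      using m below_m by (auto simp: Suc_le_eq) (metis nat_neq_iff less_irrefl)
    ultimately show ?thesis by simp
  qed
qed

theorem lemma13: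
  fixes n :: nat and f :: "nat \<Rightarrow> nat" and S :: "nat set"
  assumes "\<forall>i\<in>{1..n}. f i \<in> {0, 1}"
    and "S = {i\<in>{1..n}. f i = 1}"
    and "S \<noteq> {}"
  shows "length (lz_text n f) = 4*n + 2 \<and> lz_factors (lz_text n f) 0 (2 * card S + 4)"
proof
  let ?T = "lz_text n f"
  show "length ?T = 4 * n + 2" by (rule length_lz_text)
  have S: "S = {i\<in>{1..n}. f i \<noteq> 0}"
    using assms(1,2) by force
  then have nonzero: "\<exists>i\<in>{1..n}. f i \<noteq> 0" and "1 \<le> n"
    using assms(3) by auto
  have fresh_Dollar: "?T ! (2 * n) \<notin> set (take (2 * n) ?T)"
    by (auto simp: nth_lz_text in_set_conv_nth length_lz_text nth_lz_text_Zero)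
  have "lz_factors ?T (2 * n + 1) (2 * card S + 1)"
    using lz_factors_lz_text_suffix[OF nonzero, of 1] \<open>1 \<le> n\<close> unfolding S by simp
  then have "lz_factors ?T (2 * n) (Suc (2 * card S + 1))"
    using lz_factors_stepI[OF _ lz_factor_len_fresh[OF fresh_Dollar]] by (simp add: length_lz_text)
  moreover have "lz_factor_len ?T 1 = 2 * n - 1"
    by (rule lz_factor_len_run[where x = Zero])
      (use \<open>1 \<le> n\<close> fresh_Dollar in \<open>auto simp: length_lz_text nth_lz_text_prefix\<close>)
  ultimately have "lz_factors ?T 1 (Suc (Suc (2 * card S + 1)))"
    using \<open>1 \<le> n\<close> lz_factors_stepI[of ?T 1 "2 * n - 1"] by (simp add: length_lz_text)
  then have "lz_factors ?T 0 (Suc (Suc (Suc (Suc (2 * card S)))))"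
    using lz_factors_stepI[of ?T 0 1] lz_factor_len_fresh[of ?T 0] by (simp add: length_lz_text)
  then show "lz_factors ?T 0 (2 * card S + 4)"
    by (simp add: numeral_eq_Suc)
qed

end
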